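(* Let $w \in \mathbb{R}^n$ with $w_j > 0$ for all $j$, and let $x \in \mathbb{R}^n$ with $x_j > 0$ for $2 \le j \le n$. Then \[ \min_{z \in \Omega_1} \|x - z\| = \min_{t \in [x_1^+,\,1]} \|x - \phi_t(x)\|. \] Moreover, if $z^* = \arg\min_{z \in \Omega_1} \|x - z\|$, then for $2 \le j \le n$: $w_1 z^*_j < w_j z^*_1$ if $w_1 x_j < w_j z^*_1$, and $w_1 z^*_j = w_j z^*_1$ if $w_1 x_j \ge w_j z^*_1$.
   Context: $\|\cdot\|$ is the Euclidean norm on $\mathbb{R}^n$. $\Omega_1 := \{ z \in \mathbb{R}^n_+ : z_1 \le 1,\ w_1 z_j \le w_j z_1 \text{ for } 2 \le j \le n\}$. For $t \in \mathbb{R}$, $\phi_t : \mathbb{R}^n \to \mathbb{R}^n$ is defined by $\phi_t(x)_1 = t$, and for $j \ne 1$: $\phi_t(x)_j = \frac{w_j}{w_1} t$ if $\frac{w_1}{w_j} x_j \ge t$, and $\phi_t(x)_j = x_j$ otherwise. $x_1^+ := \min\{1, \max\{0, x_1\}\}$. *)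

theory Defs
  imports "HOL-Analysis.Analysis"
begin

text \<open>Vectors in R^n are modelled as real^'n; the distinguished first coordinate
  (index 1 in the paper) is an arbitrary fixed index i1 :: 'n, the other
  coordinates j \<noteq> i1 play the role of 2 \<le> j \<le> n.\<close>

definition Omega1 :: "real^'n \<Rightarrow> 'n \<Rightarrow> (real^'n) set" where
  "Omega1 w i1 = {z. (\<forall>j. 0 \<le> z $ j) \<and> z $ i1 \<le> 1 \<and>
                      (\<forall>j. j \<noteq> i1 \<longrightarrow> w $ i1 * z $ j \<le> w $ j * z $ i1)}"

definition phi :: "real^'n \<Rightarrow> 'n \<Rightarrow> real \<Rightarrow> real^'n \<Rightarrow> real^'n" where
  "phi w i1 t x = (\<chi> j. if j = i1 then t
                         else if (w $ i1 / w $ j) * x $ j \<ge> t then (w $ j / w $ i1) * t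
                         else x $ j)"

definition clip01 :: "real \<Rightarrow> real" where
  "clip01 a = min 1 (max 0 a)"

end

theory Submission
  imports Defs
begin

text \<open>For j \<noteq> 1 the j-th coordinate of phi_t(x) is min x_j ((w_j/w_1) t), the point closest
  to x_j below the cap (w_j/w_1) t that membership in Omega_1 imposes on z_j when z_1 = t.
  Hence replacing z \<in> Omega_1 by phi_(z_1)(x) moves every coordinate weakly, and every changed
  one strictly, closer to x; so a nearest point z* of the closed set Omega_1 equals
  phi_(z*_1)(x), which gives the description of its coordinates. Raising t only raises the
  caps, which helps since x_j > 0, so t can moreover be pushed up to x_1^+ without increasing
  the distance.\<close>

lemma norm_less_componentwise_cart:
  fixes a b :: "real^'n"
  assumes "\<And>i. \<bar>a$i\<bar> \<le> \<bar>b$i\<bar>" and "\<bar>a$j\<bar> < \<bar>b$j\<bar>"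
  shows "norm a < norm b"
proof -
  have "(\<Sum>i\<in>UNIV. (a$i)\<^sup>2) < (\<Sum>i\<in>UNIV. (b$i)\<^sup>2)"
  proof (rule sum_strict_mono_ex1)
    show "\<forall>i\<in>UNIV. (a$i)\<^sup>2 \<le> (b$i)\<^sup>2"
      using assms(1) abs_le_square_iff by blast
    show "\<exists>i\<in>UNIV. (a$i)\<^sup>2 < (b$i)\<^sup>2"
      using assms(2) abs_le_square_iff[of "b$j" "a$j"] by (auto simp: not_le)
  qed simp
  then show ?thesis
    by (simp add: norm_vec_def L2_set_def)
qed

lemma phi_nth_base [simp]: "phi w i1 t x $ i1 = t"
  by (simp add: phi_def)

lemma phi_nth:
  assumes "0 < w$i1" and "0 < w$j" and "j \<noteq> i1"
  shows "phi w i1 t x $ j = min (x$j) (w$j / w$i1 * t)"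
proof -
  have "t \<le> w$i1 / w$j * x$j \<longleftrightarrow> w$j / w$i1 * t \<le> x$j"
    using assms(1,2) by (simp add: field_simps)
  then show ?thesis
    using assms(3) by (auto simp: phi_def min_def)
qed

lemma Omega1_nth_bounds:
  assumes "0 < w$i1" and "z \<in> Omega1 w i1" and "j \<noteq> i1"
  shows "0 \<le> z$j" and "z$j \<le> w$j / w$i1 * z$i1"
  using assms by (auto simp: Omega1_def field_simps)

lemma Omega1_nth_base_bounds:
  assumes "z \<in> Omega1 w i1"
  shows "0 \<le> z$i1" and "z$i1 \<le> 1"
  using assms by (auto simp: Omega1_def)

lemma phi_in_Omega1:
  assumes wpos: "\<forall>j. 0 < w$j" and xpos: "\<forall>j. j \<noteq> i1 \<longrightarrow> 0 < x$j"
    and "0 \<le> t" and "t \<le> 1"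
  shows "phi w i1 t x \<in> Omega1 w i1"
  unfolding Omega1_def
proof (intro CollectI conjI allI impI)
  fix j
  show "0 \<le> phi w i1 t x $ j"
    using assms by (cases "j = i1") (auto simp: phi_nth less_imp_le)
  assume j: "j \<noteq> i1"
  have "w$i1 * min (x$j) (w$j / w$i1 * t) \<le> w$i1 * (w$j / w$i1 * t)"
    using wpos by (intro mult_left_mono) (auto simp: less_imp_le)
  then show "w$i1 * phi w i1 t x $ j \<le> w$j * phi w i1 t x $ i1"
    using wpos j by (simp add: phi_nth less_imp_neq[symmetric])
qed (use assms in simp)

lemma closed_Omega1: "closed (Omega1 w i1)"
proof -
  have "Omega1 w i1 = (\<Inter>j. {z. 0 \<le> z$j}) \<inter> {z. z$i1 \<le> 1} \<inter>
          (\<Inter>j\<in>-{i1}. {z. w$i1 * z$j \<le> w$j * z$i1})"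
    by (auto simp: Omega1_def)
  then show ?thesis
    by (simp only:) (intro closed_Int closed_INT ballI closed_Collect_le continuous_intros)
qed

lemma abs_diff_phi_nth_le:
  assumes wpos: "\<forall>j. 0 < w$j" and z: "z \<in> Omega1 w i1"
  shows "\<bar>x$j - phi w i1 (z$i1) x $ j\<bar> \<le> \<bar>x$j - z$j\<bar>"
proof (cases "j = i1")
  case False
  then show ?thesis
    using Omega1_nth_bounds[OF _ z False] wpos by (auto simp: phi_nth min_def)
qed simp

lemma abs_diff_phi_nth_less:
  assumes wpos: "\<forall>j. 0 < w$j" and z: "z \<in> Omega1 w i1"
    and "phi w i1 (z$i1) x $ j \<noteq> z$j"
  shows "\<bar>x$j - phi w i1 (z$i1) x $ j\<bar> < \<bar>x$j - z$j\<bar>"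
proof -
  have j: "j \<noteq> i1"
    using assms(3) by auto
  show ?thesis
    using Omega1_nth_bounds[OF _ z j] wpos assms(3) by (auto simp: phi_nth[OF _ _ j] min_def)
qed

lemma norm_diff_phi_le:
  assumes "\<forall>j. 0 < w$j" and "z \<in> Omega1 w i1"
  shows "norm (x - phi w i1 (z$i1) x) \<le> norm (x - z)"
  using abs_diff_phi_nth_le[OF assms] by (intro norm_le_componentwise_cart) simp

lemma Omega1_minimizer_eq_phi:
  assumes wpos: "\<forall>j. 0 < w$j" and xpos: "\<forall>j. j \<noteq> i1 \<longrightarrow> 0 < x$j"
    and zs: "zs \<in> Omega1 w i1" and min: "\<forall>z\<in>Omega1 w i1. norm (x - zs) \<le> norm (x - z)"
  shows "zs = phi w i1 (zs$i1) x"
proof (rule ccontr)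
  assume "zs \<noteq> phi w i1 (zs$i1) x"
  then obtain j where j: "phi w i1 (zs$i1) x $ j \<noteq> zs$j"
    by (metis vec_eq_iff)
  have "norm (x - phi w i1 (zs$i1) x) < norm (x - zs)"
    using abs_diff_phi_nth_le[OF wpos zs] abs_diff_phi_nth_less[OF wpos zs j]
    by (intro norm_less_componentwise_cart[where j = j]) auto
  moreover have "phi w i1 (zs$i1) x \<in> Omega1 w i1"
    using phi_in_Omega1[OF wpos xpos] Omega1_nth_base_bounds[OF zs] by blast
  ultimately show False
    using min by force
qed

lemma Omega1_minimizer_nth:
  assumes wpos: "\<forall>j. 0 < w$j" and xpos: "\<forall>j. j \<noteq> i1 \<longrightarrow> 0 < x$j"
    and z: "z \<in> Omega1 w i1" and z_min: "\<forall>z'\<in>Omega1 w i1. norm (x - z) \<le> norm (x - z')"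
    and j: "j \<noteq> i1"
  shows "(w$i1 * x$j < w$j * z$i1 \<longrightarrow> w$i1 * z$j < w$j * z$i1) \<and>
         (w$i1 * x$j \<ge> w$j * z$i1 \<longrightarrow> w$i1 * z$j = w$j * z$i1)"
proof -
  have w: "0 < w$i1" "0 < w$j"
    using wpos by auto
  have "z$j = min (x$j) (w$j / w$i1 * z$i1)"
    using Omega1_minimizer_eq_phi[OF wpos xpos z z_min] phi_nth[OF w j] by metis
  then show ?thesis
    using w by (auto simp: min_def field_simps)
qed

text \<open>The base coordinate clip01 x_1 lies between t and x_1 whenever it exceeds t.\<close>

lemma norm_diff_phi_max_clip01_le:
  assumes wpos: "\<forall>j. 0 < w$j" and "0 \<le> t"
  shows "norm (x - phi w i1 (max t (clip01 (x$i1))) x) \<le> norm (x - phi w i1 t x)"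
proof (rule norm_le_componentwise_cart)
  fix j
  show "norm ((x - phi w i1 (max t (clip01 (x$i1))) x) $ j) \<le> norm ((x - phi w i1 t x) $ j)"
  proof (cases "j = i1")
    case True
    then show ?thesis
      using \<open>0 \<le> t\<close> by (auto simp: clip01_def min_def max_def)
  next
    case False
    have "w$j / w$i1 * t \<le> w$j / w$i1 * max t (clip01 (x$i1))"
      using wpos by (intro mult_left_mono) (auto simp: less_imp_le)
    then show ?thesis
      using wpos False by (auto simp: phi_nth min_def)
  qed
qed

lemma INF_eq_attained:
  fixes f :: "'a \<Rightarrow> real"
  assumes "a \<in> S" and "\<forall>y\<in>S. f a \<le> f y"
  shows "(INF y\<in>S. f y) = f a"
  using assms by (intro cInf_eq_minimum) auto

theorem mainTheorem3:
  fixes w x :: "real^'n" and i1 :: 'n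
  assumes wpos: "\<forall>j. w $ j > 0"
    and xpos: "\<forall>j. j \<noteq> i1 \<longrightarrow> x $ j > 0"
  shows "(\<exists>z\<in>Omega1 w i1. \<forall>z'\<in>Omega1 w i1. norm (x - z) \<le> norm (x - z'))
       \<and> (\<exists>t\<in>{clip01 (x $ i1)..1}. \<forall>t'\<in>{clip01 (x $ i1)..1}.
             norm (x - phi w i1 t x) \<le> norm (x - phi w i1 t' x))
       \<and> (INF z\<in>Omega1 w i1. norm (x - z)) = (INF t\<in>{clip01 (x $ i1)..1}. norm (x - phi w i1 t x))
       \<and> (\<forall>zs\<in>Omega1 w i1. (\<forall>z\<in>Omega1 w i1. norm (x - zs) \<le> norm (x - z)) \<longrightarrow>
            (\<forall>j. j \<noteq> i1 \<longrightarrow>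
               (w $ i1 * x $ j < w $ j * zs $ i1 \<longrightarrow> w $ i1 * zs $ j < w $ j * zs $ i1) \<and>
               (w $ i1 * x $ j \<ge> w $ j * zs $ i1 \<longrightarrow> w $ i1 * zs $ j = w $ j * zs $ i1)))"
  (is "_ \<and> _ \<and> ?INF_eq \<and> ?minimizers")
proof -
  define c where "c = clip01 (x$i1)"
  have phi_mem: "phi w i1 t x \<in> Omega1 w i1" if "t \<in> {c..1}" for t
    using that phi_in_Omega1[OF wpos xpos] by (auto simp: c_def clip01_def)
  have "Omega1 w i1 \<noteq> {}"
    using phi_in_Omega1[OF wpos xpos, of 0] by auto
  then obtain zs where zs: "zs \<in> Omega1 w i1"
    and zs_dist: "\<And>z. z \<in> Omega1 w i1 \<Longrightarrow> dist x zs \<le> dist x z"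
    using distance_attains_inf[OF closed_Omega1] by blast
  have zs_min: "\<forall>z\<in>Omega1 w i1. norm (x - zs) \<le> norm (x - z)"
    using zs_dist by (simp add: dist_norm)
  define t0 where "t0 = max (zs$i1) c"
  have t0: "t0 \<in> {c..1}"
    using Omega1_nth_base_bounds[OF zs] by (auto simp: t0_def c_def clip01_def)
  have "norm (x - phi w i1 t0 x) \<le> norm (x - zs)"
    unfolding t0_def c_def
    using norm_diff_phi_max_clip01_le[OF wpos Omega1_nth_base_bounds(1)[OF zs]]
      norm_diff_phi_le[OF wpos zs] by (rule order_trans)
  then have t0_eq: "norm (x - phi w i1 t0 x) = norm (x - zs)"
    using zs_min phi_mem[OF t0] by (simp add: antisym)
  have t0_min: "\<forall>t\<in>{c..1}. norm (x - phi w i1 t0 x) \<le> norm (x - phi w i1 t x)"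
    using t0_eq zs_min phi_mem by simp
  have ?INF_eq
    using INF_eq_attained[OF zs zs_min] INF_eq_attained[OF t0 t0_min] t0_eq by (simp add: c_def)
  moreover have ?minimizers
    using Omega1_minimizer_nth[OF wpos xpos] by blast
  ultimately show ?thesis
    using zs zs_min t0 t0_min unfolding c_def by blast
qed

end
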